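(* Under the standing setup and with $u$, $z^*$, $r_u$, $\delta_v$, $z_v$ as in the context, assume in addition that $\beta(u)\ne0$ and let $v\in B(u,r_u)\cap\widetilde X$ satisfy $\|u-v\|\le\frac{\varepsilon\|\beta(u)\|}{480}$. Then \[\|z_v\|\le\Big(1+4\delta_v\frac{\|u-u_{NN}\|}{\|\beta(u)\|}\Big)\|\beta(v)\|.\]
   Context: Norms are Euclidean; $B(x,r)$ is the open ball. Standing setup: $X\subseteq\mathbb{R}^d$ has reach $\tau_X>0$, where $\tau_X=\sup\{t\ge0:\text{every }x\text{ with }d(x,X)<t\text{ has a unique closest point in }\overline X\}$; $\widetilde X=X+B(0,\tau_X/2)$; for $u\in\widetilde X$, $u_{NN}$ is the unique closest point to $u$ in $\overline X$, and it is a known fact that $\|u_{NN}-v_{NN}\|\le2\|u-v\|$ for all $u,v\in\widetilde X$. $\varepsilon\in(0,1)$. $S_X=\overline{\{(x-y)/\|x-y\|:x\ne y\in X\}}$. A linear $\Pi$ provides $\eta$-convex hull distortion for $T\subseteq S^{d-1}$ if $|\,\|\Pi x\|-\|x\|\,|<\eta$ for all $x\in\operatorname{conv}(T)$. $\mathcal C=\{w_1,\ldots,w_\ell\}\subseteq S_X$ is finite with every $v\in S_X$ within distance $<\varepsilon/40$ of some $w_i$; $\Pi\in\mathbb{R}^{m\times d}$ provides $\frac{\varepsilon}{240}$-convex hull distortion for $S_X$. For $z\in\mathbb{R}^m$, $u\in\widetilde X$, $i=1,\ldots,\ell$: $\tilde g_i(z,u)=\langle z,\Pi w_i\rangle-\langle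 u-u_{NN},w_i\rangle-\frac{\varepsilon}{30}\|u-u_{NN}\|$, $\tilde g_{\ell+i}(z,u)=\langle u-u_{NN},w_i\rangle-\langle z,\Pi w_i\rangle-\frac{\varepsilon}{30}\|u-u_{NN}\|$; $\widetilde F_u=\{z:\tilde g_i(z,u)\le0\ \forall i\}$; $\beta(u)=\arg\min_{z\in\widetilde F_u}\|z\|$. Fix $u\in\widetilde X\setminus\overline X$ and $z^*\in\mathbb{R}^m$ with $\|z^*\|\le\|u-u_{NN}\|$ and $\tilde g_i(z^*,u)\le-\frac{\varepsilon}{60}\|u-u_{NN}\|$ for all $i$. Set $r_u=\min\{1,\frac{\varepsilon\|u-u_{NN}\|}{480}\}$, and for $v\in B(u,r_u)\cap\widetilde X$, $\delta_v=\frac{240\|u-v\|}{\varepsilon\|u-u_{NN}\|}$, $z_v=(1-\delta_v)\beta(u)+\delta_vz^*$. *)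

theory Defs
  imports "HOL-Analysis.Analysis"
begin

text \<open>Reach of a set (in the extended reals, so that infinite reach is allowed):
  sup of all t \<ge> 0 such that every x with d(x,X) < t has a unique closest point in closure X.\<close>
definition reach :: "'a::euclidean_space set \<Rightarrow> ereal" where
  "reach X = Sup {ereal t | t. t \<ge> 0 \<and>
      (\<forall>x. infdist x X < t \<longrightarrow> (\<exists>!y. y \<in> closure X \<and> dist x y = infdist x X))}"

definition Xtilde :: "'a::euclidean_space set \<Rightarrow> 'a set" where
  "Xtilde X = {x + y | x y. x \<in> X \<and> ereal (norm y) < reach X / 2}"

definition nn :: "'a::euclidean_space set \<Rightarrow> 'a \<Rightarrow> 'a" where
  "nn X u = (THE y. y \<in> closure X \<and> dist u y = infdist u X)"

definition secants :: "'a::euclidean_space set \<Rightarrow> 'a set" where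
  "secants X = closure {(1 / norm (x - y)) *\<^sub>R (x - y) | x y. x \<in> X \<and> y \<in> X \<and> x \<noteq> y}"

definition convex_hull_distortion ::
    "('a::euclidean_space \<Rightarrow> 'b::euclidean_space) \<Rightarrow> real \<Rightarrow> 'a set \<Rightarrow> bool" where
  "convex_hull_distortion Pm \<eta> T \<longleftrightarrow> (\<forall>x \<in> convex hull T. \<bar>norm (Pm x) - norm x\<bar> < \<eta>)"

definition gt ::
    "('a::euclidean_space \<Rightarrow> 'b::euclidean_space) \<Rightarrow> (nat \<Rightarrow> 'a) \<Rightarrow> nat \<Rightarrow> real \<Rightarrow> 'a set
     \<Rightarrow> nat \<Rightarrow> 'b \<Rightarrow> 'a \<Rightarrow> real" where
  "gt Pm w l \<epsilon> X i z u =
     (if i \<le> l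
      then inner z (Pm (w i)) - inner (u - nn X u) (w i) - \<epsilon> / 30 * norm (u - nn X u)
      else inner (u - nn X u) (w (i - l)) - inner z (Pm (w (i - l))) - \<epsilon> / 30 * norm (u - nn X u))"

definition Ft ::
    "('a::euclidean_space \<Rightarrow> 'b::euclidean_space) \<Rightarrow> (nat \<Rightarrow> 'a) \<Rightarrow> nat \<Rightarrow> real \<Rightarrow> 'a set
     \<Rightarrow> 'a \<Rightarrow> 'b set" where
  "Ft Pm w l \<epsilon> X u = {z. \<forall>i \<in> {1..2*l}. gt Pm w l \<epsilon> X i z u \<le> 0}"

definition beta ::
    "('a::euclidean_space \<Rightarrow> 'b::euclidean_space) \<Rightarrow> (nat \<Rightarrow> 'a) \<Rightarrow> nat \<Rightarrow> real \<Rightarrow> 'a set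
     \<Rightarrow> 'a \<Rightarrow> 'b" where
  "beta Pm w l \<epsilon> X u = (ARG_MIN norm z. z \<in> Ft Pm w l \<epsilon> X u)"

end

theory Submission
  imports Defs
begin

text \<open>Moving the base point from u to v changes every constraint of F~ by at most 4 |u - v|,
  because u_NN is 2-Lipschitz within half the reach. For that we follow Federer: the open ball
  of radius t d(x, X) around u_NN + t (x - u_NN) misses X while t d(x, X) stays below the reach
  (the normal segment is prolonged by a Brouwer fixed-point argument), and the inner-product
  inequalities this gives at two points combine to the Lipschitz bound.
  The margin of z* absorbs the perturbation in the convex combination with weight \<delta>, which
  moves beta(u) into F~_v and beta(v) into F~_u; hence |beta(u)| \<le> |beta(v)| + \<delta> |u - u_NN|,
  and the bound on |u - v| gives \<delta> |u - u_NN| \<le> |beta(u)| / 2.\<close>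

definition unique_nearest :: "'a::euclidean_space set \<Rightarrow> real \<Rightarrow> bool" where
  "unique_nearest X R \<longleftrightarrow>
     (\<forall>x. infdist x X < R \<longrightarrow> (\<exists>!y. y \<in> closure X \<and> dist x y = infdist x X))"

lemma nn_nearest:
  assumes "unique_nearest X R" "infdist x X < R"
  shows "nn X x \<in> closure X \<and> dist x (nn X x) = infdist x X"
proof -
  have "\<exists>!y. y \<in> closure X \<and> dist x y = infdist x X"
    using assms unfolding unique_nearest_def by blast
  then show ?thesis unfolding nn_def by (rule theI')
qed

lemma nn_eqI:
  assumes "unique_nearest X R" "infdist x X < R" "y \<in> closure X" "dist x y = infdist x X"
  shows "nn X x = y"
proof -
  have "\<exists>!y. y \<in> closure X \<and> dist x y = infdist x X"
    using assms unfolding unique_nearest_def by blast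
  then show ?thesis unfolding nn_def using assms(3,4) by (intro the1_equality) auto
qed

lemma infdist_le_closure: "y \<in> closure A \<Longrightarrow> infdist x A \<le> dist x y"
  by (metis infdist_eq_setdist infdist_le setdist_closure_2)

lemma infdist_geI:
  assumes "A \<noteq> {}" "\<And>a. a \<in> closure A \<Longrightarrow> c \<le> dist x a"
  shows "c \<le> infdist x A"
  unfolding infdist_def using assms closure_subset by (auto intro!: cINF_greatest)

lemma nn_continuous_on:
  fixes X :: "'a::euclidean_space set"
  assumes X: "unique_nearest X R" and near: "\<And>z. z \<in> cball y \<rho> \<Longrightarrow> infdist z X < R"
  shows "continuous_on (cball y \<rho>) (nn X)"
proof -
  define T where "T = cball y (2 * \<rho> + infdist y X) \<inter> closure X"
  have "nn X \<in> cball y \<rho> \<rightarrow> T"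
  proof
    fix z assume z: "z \<in> cball y \<rho>"
    note nz = nn_nearest[OF X near[OF z]]
    have "dist y (nn X z) \<le> dist y z + dist z (nn X z)" by (rule dist_triangle)
    also have "\<dots> \<le> 2 * \<rho> + infdist y X"
      using z nz infdist_triangle[of z X y] by (simp add: dist_commute)
    finally show "nn X z \<in> T" unfolding T_def using nz by simp
  qed
  moreover have "compact T" unfolding T_def by (simp add: compact_Int_closed)
  moreover
  define G where "G = {p. snd p \<in> closure X \<and> dist (fst p) (snd p) = infdist (fst p) X}"
  have "(\<lambda>x. (x, nn X x)) ` cball y \<rho> = (cball y \<rho> \<times> T) \<inter> G"
    using \<open>nn X \<in> cball y \<rho> \<rightarrow> T\<close> nn_nearest[OF X near] nn_eqI[OF X near]
    unfolding G_def by (auto simp: image_iff)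
  moreover have "closed G"
  proof -
    have "G = snd -` closure X \<inter> {p. dist (fst p) (snd p) = infdist (fst p) X}"
      unfolding G_def by auto
    moreover have "closed (snd -` closure X :: ('a \<times> 'a) set)"
      by (intro closed_vimage continuous_intros) simp
    moreover have "closed {p::'a \<times> 'a. dist (fst p) (snd p) = infdist (fst p) X}"
      by (intro closed_Collect_eq continuous_intros continuous_on_infdist)
    ultimately show ?thesis by auto
  qed
  ultimately show ?thesis
    using continuous_closed_graph_eq closedin_closed_Int[of G "cball y \<rho> \<times> T"] by metis
qed

lemma nn_outward_fixed_point:
  fixes X :: "'a::euclidean_space set"
  assumes X: "unique_nearest X R" and d0: "0 < infdist y X" and dR: "infdist y X < R"
  obtains k z where "0 < k" "z = y + k *\<^sub>R (y - nn X z)" "infdist z X < R"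
proof -
  define d where "d = infdist y X"
  define \<rho> where "\<rho> = (R - d) / 2"
  define k where "k = \<rho> / (d + 2 * \<rho>)"
  have \<rho>0: "0 < \<rho>" using dR unfolding \<rho>_def d_def by simp
  then have k0: "0 < k" using d0 unfolding k_def d_def by simp
  have near: "infdist z X < R" if "z \<in> cball y \<rho>" for z
  proof -
    have "infdist z X \<le> d + \<rho>"
      using that infdist_triangle[of z X y] by (simp add: d_def dist_commute)
    also have "\<dots> < R" using dR unfolding \<rho>_def d_def by (simp add: field_simps)
    finally show ?thesis .
  qed
  define \<Phi> where "\<Phi> z = y + k *\<^sub>R (y - nn X z)" for z
  have "continuous_on (cball y \<rho>) \<Phi>"
    unfolding \<Phi>_def by (intro continuous_intros nn_continuous_on[OF X near]) auto
  moreover have "\<Phi> \<in> cball y \<rho> \<rightarrow> cball y \<rho>"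
  proof
    fix z assume z: "z \<in> cball y \<rho>"
    note nz = nn_nearest[OF X near[OF z]]
    have "norm (y - nn X z) \<le> dist y z + dist z (nn X z)"
      using dist_triangle[of y "nn X z" z] by (simp add: dist_norm)
    also have "\<dots> \<le> d + 2 * \<rho>"
      using z nz infdist_triangle[of z X y] by (simp add: d_def dist_commute)
    finally have "k * norm (y - nn X z) \<le> k * (d + 2 * \<rho>)" using k0 by simp
    also have "\<dots> = \<rho>" unfolding k_def using \<rho>0 d0 d_def by (simp add: field_simps)
    finally show "\<Phi> z \<in> cball y \<rho>" unfolding \<Phi>_def using k0 by (simp add: dist_norm)
  qed
  ultimately obtain z where "z \<in> cball y \<rho>" "\<Phi> z = z" using brouwer_ball[OF \<rho>0] by blast
  then show ?thesis using that[OF k0, of z] near unfolding \<Phi>_def by metis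
qed

text \<open>Taking the Brouwer fixed point z, the nearest point of z is also nearest to y, and the
  normal segment from it through y can be prolonged up to z.\<close>
lemma normal_ray_extends:
  fixes X :: "'a::euclidean_space set"
  assumes X: "unique_nearest X R" and d0: "0 < infdist y X" and dR: "infdist y X < R"
  shows "\<exists>\<kappa>>1. \<forall>q\<in>closure X. \<kappa> * infdist y X \<le> dist (nn X y + \<kappa> *\<^sub>R (y - nn X y)) q"
proof -
  obtain k z where k0: "0 < k" and z: "z = y + k *\<^sub>R (y - nn X z)" and near: "infdist z X < R"
    using nn_outward_fixed_point[OF assms] .
  define p where "p = nn X z"
  note nz = nn_nearest[OF X near, folded p_def]
  note z = z[folded p_def]
  have "z - p = (1 + k) *\<^sub>R (y - p)" "z - y = k *\<^sub>R (y - p)"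
    unfolding z by (simp_all add: algebra_simps)
  then have zp: "dist z p = (1 + k) * norm (y - p)" and zy: "dist z y = k * norm (y - p)"
    using k0 by (simp_all add: dist_norm)
  have p_min: "dist z p \<le> dist z q" if "q \<in> closure X" for q
    using nz infdist_le_closure[OF that, of z] by simp
  have "norm (y - p) \<le> dist y q" if "q \<in> closure X" for q
    using p_min[OF that] dist_triangle[of z q y] zp zy by (simp add: algebra_simps)
  then have "norm (y - p) \<le> infdist y X" using nz by (intro infdist_geI) auto
  moreover have "infdist y X \<le> norm (y - p)"
    using infdist_le_closure[of p X y] nz by (simp add: dist_norm)
  ultimately have yp: "dist y p = infdist y X" by (simp add: dist_norm)
  then have "nn X y = p" using nn_eqI[OF X dR] nz by blast
  moreover have "z = p + (1 + k) *\<^sub>R (y - p)" unfolding z by (simp add: algebra_simps)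
  moreover have "(1 + k) * infdist y X \<le> dist z q" if "q \<in> closure X" for q
    using p_min[OF that] zp yp by (simp add: dist_norm)
  ultimately show ?thesis using k0 by (intro exI[of _ "1 + k"]) auto
qed

lemma ray_ball_clear_mono:
  fixes p e :: "'a::real_normed_vector"
  assumes "\<forall>q\<in>S. t * norm e \<le> dist q (p + t *\<^sub>R e)" "0 \<le> s" "s \<le> t"
  shows "\<forall>q\<in>S. s * norm e \<le> dist q (p + s *\<^sub>R e)"
proof
  fix q assume "q \<in> S"
  then have "t * norm e \<le> dist q (p + t *\<^sub>R e)" using assms(1) by blast
  also have "\<dots> \<le> dist q (p + s *\<^sub>R e) + dist (p + s *\<^sub>R e) (p + t *\<^sub>R e)"
    by (rule dist_triangle)
  also have "dist (p + s *\<^sub>R e) (p + t *\<^sub>R e) = (t - s) * norm e"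
    using \<open>s \<le> t\<close> by (simp add: dist_norm flip: scaleR_diff_left)
  finally show "s * norm e \<le> dist q (p + s *\<^sub>R e)" by (simp add: algebra_simps)
qed

lemma closed_ray_ball_clear:
  fixes p e :: "'a::real_normed_vector"
  shows "closed {s. 0 \<le> s \<and> (\<forall>q\<in>S. s * norm e \<le> dist q (p + s *\<^sub>R e))}"
proof -
  have "{s. 0 \<le> s \<and> (\<forall>q\<in>S. s * norm e \<le> dist q (p + s *\<^sub>R e))}
      = {s. 0 \<le> s} \<inter> (\<Inter>q\<in>S. {s. s * norm e \<le> dist q (p + s *\<^sub>R e)})"
    by auto
  then show ?thesis by (auto intro!: closed_Collect_le continuous_intros)
qed

text \<open>The admissible t form a closed interval [0, T]; if T were below the reach,
  the normal segment could be prolonged beyond p + T e by normal_ray_extends.\<close>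
lemma normal_ray_clear:
  fixes X :: "'a::euclidean_space set"
  assumes X: "unique_nearest X R" and d0: "0 < infdist x X" and dR: "infdist x X < R"
    and t0: "0 \<le> t" and tR: "t * infdist x X < R"
  shows "\<forall>q\<in>closure X. t * infdist x X \<le> dist q (nn X x + t *\<^sub>R (x - nn X x))"
proof (rule ccontr)
  define p where "p = nn X x"
  define e where "e = x - p"
  define d where "d = infdist x X"
  note nx = nn_nearest[OF X dR, folded p_def]
  have ne: "norm e = d" using nx unfolding e_def d_def by (simp add: dist_norm)
  define A where "A = {s. 0 \<le> s \<and> (\<forall>q\<in>closure X. s * norm e \<le> dist q (p + s *\<^sub>R e))}"
  assume "\<not> ?thesis"
  then have "t \<notin> A" unfolding A_def ne unfolding p_def e_def d_def using t0 by auto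
  then have below: "s < t" if "s \<in> A" for s
    using that ray_ball_clear_mono[of "closure X" s e p t] t0 unfolding A_def by force
  have "1 \<in> A" unfolding A_def ne
    using infdist_le_closure[of _ X x] by (auto simp: e_def d_def dist_commute)
  have "closed A" unfolding A_def by (rule closed_ray_ball_clear)
  have "bdd_above A" using below by (auto intro!: bdd_aboveI[of _ t] less_imp_le)
  define T where "T = Sup A"
  have "T \<in> A" unfolding T_def using closed_contains_Sup \<open>bdd_above A\<close> \<open>closed A\<close> \<open>1 \<in> A\<close>
    by blast
  have T1: "1 \<le> T" unfolding T_def using cSup_upper \<open>bdd_above A\<close> \<open>1 \<in> A\<close> by blast
  define y where "y = p + T *\<^sub>R e"
  have yp: "dist y p = T * d" unfolding y_def using ne T1 by (simp add: dist_norm)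
  have "T * d \<le> infdist y X" using \<open>T \<in> A\<close> nx unfolding A_def y_def ne
    by (intro infdist_geI) (auto simp: dist_commute)
  moreover have "infdist y X \<le> T * d" using infdist_le_closure[of p X y] nx yp by simp
  ultimately have dy: "infdist y X = T * d" by simp
  have "T * d < t * d" using below[OF \<open>T \<in> A\<close>] d0 unfolding d_def by simp
  then have "T * d < R" using tR unfolding d_def by simp
  then have "nn X y = p" using nn_eqI[OF X] nx dy yp by simp
  moreover have "0 < infdist y X" using dy T1 d0 d_def by simp
  ultimately obtain \<kappa> where "\<kappa> > 1"
    and \<kappa>: "\<forall>q\<in>closure X. \<kappa> * (T * d) \<le> dist (p + \<kappa> *\<^sub>R (y - p)) q"
    using normal_ray_extends[OF X, of y] dy \<open>T * d < R\<close> by auto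
  have "p + \<kappa> *\<^sub>R (y - p) = p + (\<kappa> * T) *\<^sub>R e" unfolding y_def by simp
  then have "\<kappa> * T \<in> A"
    using \<kappa> \<open>\<kappa> > 1\<close> T1 unfolding A_def ne by (simp add: dist_commute mult.assoc)
  then have "\<kappa> * T \<le> T" unfolding T_def using cSup_upper[OF _ \<open>bdd_above A\<close>] by simp
  then show False using \<open>\<kappa> > 1\<close> T1 by simp
qed

lemma normal_inner_le:
  fixes X :: "'a::euclidean_space set"
  assumes X: "unique_nearest X R" and dR: "infdist x X < R" and q: "q \<in> closure X"
    and r0: "0 \<le> r" and rR: "r < R"
  shows "2 * r * inner (q - nn X x) (x - nn X x) \<le> infdist x X * (norm (q - nn X x))\<^sup>2"
proof (cases "infdist x X = 0")
  case True
  then show ?thesis using nn_nearest[OF X dR] by simp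
next
  case False
  define d where "d = infdist x X"
  define p where "p = nn X x"
  define e where "e = x - p"
  define t where "t = r / d"
  have d0: "0 < d" using False infdist_nonneg[of x X] unfolding d_def by linarith
  have ne: "norm e = d" using nn_nearest[OF X dR] unfolding e_def p_def d_def by (simp add: dist_norm)
  have td: "t * d = r" unfolding t_def using d0 by simp
  have "r \<le> dist q (p + t *\<^sub>R e)"
    using normal_ray_clear[OF X _ dR, of t] d0 td rR q r0
    unfolding d_def p_def e_def t_def by auto
  then have "r\<^sup>2 \<le> (norm ((q - p) - t *\<^sub>R e))\<^sup>2"
    using r0 by (simp add: dist_norm algebra_simps power_mono)
  also have "\<dots> = (norm (q - p))\<^sup>2 - 2 * t * inner (q - p) e + (t * norm e)\<^sup>2"
    using dot_norm_neg[of "q - p" "t *\<^sub>R e"] by (simp add: power_mult_distrib)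
  also have "\<dots> = (norm (q - p))\<^sup>2 - 2 * t * inner (q - p) e + r\<^sup>2" using ne td by simp
  finally have "2 * t * inner (q - p) e \<le> (norm (q - p))\<^sup>2" by simp
  then have "d * (2 * t * inner (q - p) e) \<le> d * (norm (q - p))\<^sup>2" using d0 by simp
  then show ?thesis unfolding d_def[symmetric] p_def[symmetric] e_def[symmetric] td[symmetric]
    by (simp add: algebra_simps)
qed

text \<open>Federer's argument: add the two instances of normal_inner_le with r the sum of the
  two distances and expand.\<close>
lemma nn_lipschitz:
  fixes X :: "'a::euclidean_space set"
  assumes X: "unique_nearest X R" and xyR: "infdist x X + infdist y X < R"
  shows "norm (nn X x - nn X y) \<le> 2 * norm (x - y)"
proof -
  define p where "p = nn X x"
  define q where "q = nn X y"
  define r where "r = infdist x X + infdist y X"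
  have xR: "infdist x X < R" and yR: "infdist y X < R"
    using xyR infdist_nonneg[of x X] infdist_nonneg[of y X] by linarith+
  note nx = nn_nearest[OF X xR, folded p_def] and ny = nn_nearest[OF X yR, folded q_def]
  have r0: "0 \<le> r" unfolding r_def using infdist_nonneg[of x X] infdist_nonneg[of y X] by linarith
  show ?thesis
  proof (cases "r = 0")
    case True
    then have "infdist x X = 0" "infdist y X = 0"
      unfolding r_def using infdist_nonneg[of x X] infdist_nonneg[of y X] by linarith+
    then show ?thesis using nx ny unfolding p_def q_def by simp
  next
    case False
    have "2 * r * inner (q - p) (x - p) \<le> infdist x X * (norm (q - p))\<^sup>2"
      using normal_inner_le[OF X xR _ r0] ny xyR unfolding p_def q_def r_def by blast
    moreover have "2 * r * inner (p - q) (y - q) \<le> infdist y X * (norm (q - p))\<^sup>2"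
      using normal_inner_le[OF X yR _ r0] nx xyR unfolding p_def q_def r_def
      by (simp add: norm_minus_commute)
    ultimately have "r * (2 * (inner (q - p) (x - p) + inner (p - q) (y - q))) \<le> r * (norm (q - p))\<^sup>2"
      unfolding r_def by (simp add: algebra_simps)
    then have "2 * (inner (q - p) (x - p) + inner (p - q) (y - q)) \<le> (norm (q - p))\<^sup>2"
      using False r0 by simp
    moreover have "inner (q - p) (x - p) + inner (p - q) (y - q) = (norm (q - p))\<^sup>2 - inner (q - p) (y - x)"
      by (simp add: power2_norm_eq_inner inner_diff_left inner_diff_right algebra_simps inner_commute)
    ultimately have "(norm (q - p))\<^sup>2 \<le> 2 * inner (q - p) (y - x)" by simp
    also have "\<dots> \<le> 2 * (norm (q - p) * norm (x - y))"
      using norm_cauchy_schwarz[of "q - p" "y - x"] by (simp add: norm_minus_commute)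
    finally have "norm (q - p) * norm (q - p) \<le> norm (q - p) * (2 * norm (x - y))"
      by (simp add: power2_eq_square)
    then have "norm (q - p) \<le> 2 * norm (x - y)"
      by (cases "norm (q - p) = 0") simp_all
    then show ?thesis unfolding p_def q_def by (simp add: norm_minus_commute)
  qed
qed


lemma unique_nearest_reach:
  assumes "ereal R \<le> reach X"
  shows "unique_nearest X R"
  unfolding unique_nearest_def
proof (intro allI impI)
  fix x assume "infdist x X < R"
  then have "ereal (infdist x X) < reach X"
    using assms by (metis less_ereal.simps(1) order_less_le_trans)
  then obtain t where "0 \<le> t" "ereal (infdist x X) < ereal t"
    and "\<forall>x. infdist x X < t \<longrightarrow> (\<exists>!y. y \<in> closure X \<and> dist x y = infdist x X)"
    unfolding reach_def less_Sup_iff by blast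
  then show "\<exists>!y. y \<in> closure X \<and> dist x y = infdist x X" by simp
qed

lemma infdist_Xtilde_less:
  assumes "u \<in> Xtilde X"
  shows "ereal (infdist u X) < reach X / 2"
proof -
  obtain x y where "u = x + y" "x \<in> X" "ereal (norm y) < reach X / 2"
    using assms unfolding Xtilde_def by blast
  moreover have "infdist (x + y) X \<le> norm y"
    using infdist_le[OF \<open>x \<in> X\<close>, of "x + y"] by (simp add: dist_norm)
  ultimately show ?thesis by (meson ereal_less_eq(3) le_less_trans)
qed

lemma unique_nearest_Xtilde:
  assumes "0 < reach X" "u \<in> Xtilde X" "v \<in> Xtilde X"
  obtains R where "unique_nearest X R" "infdist u X + infdist v X < R"
proof -
  have "ereal (infdist u X + infdist v X) < reach X"
    using infdist_Xtilde_less[OF assms(2)] infdist_Xtilde_less[OF assms(3)] assms(1)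
    by (cases "reach X") auto
  then obtain R where "infdist u X + infdist v X < R" "ereal R < reach X"
    using ereal_dense2 by force
  then show ?thesis using that unique_nearest_reach by force
qed

lemma nn_in_closure_Xtilde:
  assumes "0 < reach X" "u \<in> Xtilde X"
  shows "nn X u \<in> closure X"
proof -
  obtain R where "unique_nearest X R" "infdist u X + infdist u X < R"
    using unique_nearest_Xtilde[OF assms(1,2,2)] .
  moreover have "infdist u X < R" using calculation(2) infdist_nonneg[of u X] by linarith
  ultimately show ?thesis using nn_nearest by blast
qed

lemma norm_displacement_diff_le:
  fixes X :: "'a::euclidean_space set"
  assumes "unique_nearest X R" "infdist x X + infdist y X < R"
  shows "norm ((x - nn X x) - (y - nn X y)) \<le> 3 * norm (x - y)"
proof -
  have "norm ((x - nn X x) - (y - nn X y)) \<le> norm (x - y) + norm (nn X x - nn X y)"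
    using norm_triangle_ineq4[of "x - y" "nn X x - nn X y"] by (simp add: algebra_simps)
  then show ?thesis using nn_lipschitz[OF assms] by simp
qed

lemma secants_subset_sphere: "secants X \<subseteq> sphere 0 1"
  unfolding secants_def by (intro closure_minimal) auto

lemma gt_convex_combination:
  "gt Pm w l \<epsilon> X i ((1 - \<delta>) *\<^sub>R z + \<delta> *\<^sub>R z') u
     = (1 - \<delta>) * gt Pm w l \<epsilon> X i z u + \<delta> * gt Pm w l \<epsilon> X i z' u"
  unfolding gt_def by (simp add: inner_add_left algebra_simps)

lemma gt_lipschitz:
  fixes X :: "'a::euclidean_space set"
  assumes w: "\<forall>j\<in>{1..l}. norm (w j) \<le> 1" and i: "i \<in> {1..2*l}" and "0 \<le> \<epsilon>"
  shows "\<bar>gt Pm w l \<epsilon> X i z a - gt Pm w l \<epsilon> X i z b\<bar>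
         \<le> (1 + \<epsilon> / 30) * norm ((a - nn X a) - (b - nn X b))"
proof -
  define D where "D = (a - nn X a) - (b - nn X b)"
  define j where "j = (if i \<le> l then i else i - l)"
  have "j \<in> {1..l}" using i unfolding j_def by auto
  then have "norm (w j) \<le> 1" using w by blast
  then have "\<bar>inner D (w j)\<bar> \<le> norm D"
    using Cauchy_Schwarz_ineq2[of D "w j"] by (simp add: mult_left_le order_trans)
  moreover have "\<bar>\<epsilon> / 30 * (norm (a - nn X a) - norm (b - nn X b))\<bar> \<le> \<epsilon> / 30 * norm D"
    using norm_triangle_ineq3[of "a - nn X a" "b - nn X b"] \<open>0 \<le> \<epsilon>\<close>
    unfolding D_def by (simp add: abs_mult mult_left_mono)
  moreover
  define s where "s = \<epsilon> / 30 * (norm (a - nn X a) - norm (b - nn X b))"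
  have "gt Pm w l \<epsilon> X i z a - gt Pm w l \<epsilon> X i z b
      = (if i \<le> l then - inner D (w j) else inner D (w j)) - s"
    unfolding gt_def D_def j_def s_def by (simp add: algebra_simps)
  then have "\<bar>gt Pm w l \<epsilon> X i z a - gt Pm w l \<epsilon> X i z b\<bar> \<le> \<bar>inner D (w j)\<bar> + \<bar>s\<bar>"
    using abs_triangle_ineq4[of "- inner D (w j)" s] abs_triangle_ineq4[of "inner D (w j)" s]
    by (cases "i \<le> l") simp_all
  ultimately show ?thesis unfolding s_def D_def[symmetric] by (simp add: algebra_simps)
qed

lemma gt_shift_Xtilde:
  fixes X :: "'a::euclidean_space set"
  assumes "0 < reach X" "u \<in> Xtilde X" "v \<in> Xtilde X" "\<forall>j\<in>{1..l}. w j \<in> secants X"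
    and "i \<in> {1..2*l}" "0 \<le> \<epsilon>"
  shows "\<bar>gt Pm w l \<epsilon> X i z u - gt Pm w l \<epsilon> X i z v\<bar> \<le> (3 + \<epsilon> / 10) * norm (u - v)"
proof -
  obtain R where X: "unique_nearest X R" and uvR: "infdist u X + infdist v X < R"
    using unique_nearest_Xtilde[OF assms(1-3)] .
  have "\<forall>j\<in>{1..l}. norm (w j) \<le> 1" using assms(4) secants_subset_sphere by fastforce
  then have "\<bar>gt Pm w l \<epsilon> X i z u - gt Pm w l \<epsilon> X i z v\<bar>
      \<le> (1 + \<epsilon> / 30) * norm ((u - nn X u) - (v - nn X v))"
    using assms(5,6) by (rule gt_lipschitz)
  also have "\<dots> \<le> (1 + \<epsilon> / 30) * (3 * norm (u - v))"
    using norm_displacement_diff_le[OF X uvR] assms(6) by (simp add: mult_left_mono)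
  also have "\<dots> = (3 + \<epsilon> / 10) * norm (u - v)" by (simp add: algebra_simps)
  finally show ?thesis .
qed

lemma closed_Ft: "closed (Ft Pm w l \<epsilon> X u)"
proof -
  have "Ft Pm w l \<epsilon> X u = (\<Inter>i\<in>{1..2*l}. {z. gt Pm w l \<epsilon> X i z u \<le> 0})"
    unfolding Ft_def by auto
  moreover have "closed {z. gt Pm w l \<epsilon> X i z u \<le> 0}" for i
    unfolding gt_def by (cases "i \<le> l") (auto intro!: closed_Collect_le continuous_intros)
  ultimately show ?thesis by auto
qed

lemma beta_minimal:
  assumes "z \<in> Ft Pm w l \<epsilon> X u"
  shows "beta Pm w l \<epsilon> X u \<in> Ft Pm w l \<epsilon> X u"
    and "\<forall>z'\<in>Ft Pm w l \<epsilon> X u. norm (beta Pm w l \<epsilon> X u) \<le> norm z'"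
proof -
  obtain m where m: "m \<in> Ft Pm w l \<epsilon> X u" "\<And>z'. z' \<in> Ft Pm w l \<epsilon> X u \<Longrightarrow> dist 0 m \<le> dist 0 z'"
    using distance_attains_inf[OF closed_Ft, of _ _ _ _ _ u 0] assms by blast
  have "beta Pm w l \<epsilon> X u \<in> Ft Pm w l \<epsilon> X u
      \<and> (\<forall>z'\<in>Ft Pm w l \<epsilon> X u. norm (beta Pm w l \<epsilon> X u) \<le> norm z')"
    unfolding beta_def by (rule arg_minI[of _ m]) (use m in \<open>auto simp: not_less\<close>)
  then show "beta Pm w l \<epsilon> X u \<in> Ft Pm w l \<epsilon> X u"
    and "\<forall>z'\<in>Ft Pm w l \<epsilon> X u. norm (beta Pm w l \<epsilon> X u) \<le> norm z'"
    by auto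
qed

lemma Ft_convex_combination:
  assumes "z \<in> Ft Pm w l \<epsilon> X b" "0 \<le> \<delta>" "\<delta> \<le> 1"
    and shift: "\<And>i. i \<in> {1..2*l} \<Longrightarrow> gt Pm w l \<epsilon> X i z a \<le> gt Pm w l \<epsilon> X i z b + K"
    and margin: "\<And>i. i \<in> {1..2*l} \<Longrightarrow> \<delta> * gt Pm w l \<epsilon> X i z' a + (1 - \<delta>) * K \<le> 0"
  shows "(1 - \<delta>) *\<^sub>R z + \<delta> *\<^sub>R z' \<in> Ft Pm w l \<epsilon> X a"
  unfolding Ft_def
proof (intro CollectI ballI)
  fix i assume i: "i \<in> {1..2*l}"
  have "(1 - \<delta>) * gt Pm w l \<epsilon> X i z a \<le> (1 - \<delta>) * (gt Pm w l \<epsilon> X i z b + K)"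
    using shift[OF i] \<open>\<delta> \<le> 1\<close> by (simp add: mult_left_mono)
  also have "\<dots> \<le> (1 - \<delta>) * K"
    using assms(1) i \<open>\<delta> \<le> 1\<close> unfolding Ft_def by (simp add: mult_left_mono)
  finally show "gt Pm w l \<epsilon> X i ((1 - \<delta>) *\<^sub>R z + \<delta> *\<^sub>R z') a \<le> 0"
    using margin[OF i] by (simp add: gt_convex_combination)
qed

lemma norm_convex_combination_le:
  fixes x y :: "'a::real_normed_vector"
  assumes "0 \<le> \<delta>" "\<delta> \<le> 1"
  shows "norm ((1 - \<delta>) *\<^sub>R x + \<delta> *\<^sub>R y) \<le> norm x + \<delta> * norm y"
proof -
  have "norm ((1 - \<delta>) *\<^sub>R x + \<delta> *\<^sub>R y) \<le> (1 - \<delta>) * norm x + \<delta> * norm y"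
    using norm_triangle_ineq[of "(1 - \<delta>) *\<^sub>R x" "\<delta> *\<^sub>R y"] assms by simp
  also have "\<dots> \<le> norm x + \<delta> * norm y" using assms by (simp add: algebra_simps)
  finally show ?thesis .
qed

text \<open>The two convex combinations put beta(u) into F~_v and beta(v) into F~_u.\<close>
lemma norm_beta_perturbation:
  assumes \<delta>: "0 \<le> \<delta>" "\<delta> \<le> 1" and z': "z' \<in> Ft Pm w l \<epsilon> X u"
    and shift: "\<And>i z. i \<in> {1..2*l} \<Longrightarrow> \<bar>gt Pm w l \<epsilon> X i z u - gt Pm w l \<epsilon> X i z v\<bar> \<le> K"
    and margin: "\<And>i. i \<in> {1..2*l} \<Longrightarrow> \<delta> * gt Pm w l \<epsilon> X i z' u + K \<le> 0"
  shows "norm (beta Pm w l \<epsilon> X u) \<le> norm (beta Pm w l \<epsilon> X v) + \<delta> * norm z'"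
proof -
  define bu where "bu = beta Pm w l \<epsilon> X u"
  define bv where "bv = beta Pm w l \<epsilon> X v"
  have shift_uv: "gt Pm w l \<epsilon> X i z u \<le> gt Pm w l \<epsilon> X i z v + K"
    and shift_vu: "gt Pm w l \<epsilon> X i z v \<le> gt Pm w l \<epsilon> X i z u + K"
    and K: "0 \<le> K" if "i \<in> {1..2*l}" for i z
    using shift[OF that, of z] by (auto simp: abs_le_iff)
  have "bu \<in> Ft Pm w l \<epsilon> X u" using beta_minimal(1)[OF z'] unfolding bu_def .
  then have "(1 - \<delta>) *\<^sub>R bu + \<delta> *\<^sub>R z' \<in> Ft Pm w l \<epsilon> X v"
  proof (rule Ft_convex_combination[OF _ \<delta> shift_vu])
    fix i assume i: "i \<in> {1..2*l}"
    have "\<delta> * gt Pm w l \<epsilon> X i z' v \<le> \<delta> * (gt Pm w l \<epsilon> X i z' u + K)"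
      using shift_vu[OF i] \<delta> by (simp add: mult_left_mono)
    then show "\<delta> * gt Pm w l \<epsilon> X i z' v + (1 - \<delta>) * K \<le> 0"
      using margin[OF i] by (simp add: algebra_simps)
  qed
  then have "bv \<in> Ft Pm w l \<epsilon> X v" unfolding bv_def by (rule beta_minimal(1))
  then have "(1 - \<delta>) *\<^sub>R bv + \<delta> *\<^sub>R z' \<in> Ft Pm w l \<epsilon> X u"
  proof (rule Ft_convex_combination[OF _ \<delta> shift_uv])
    fix i assume i: "i \<in> {1..2*l}"
    have "0 \<le> \<delta> * K" using K[OF i] \<delta> by simp
    then show "\<delta> * gt Pm w l \<epsilon> X i z' u + (1 - \<delta>) * K \<le> 0"
      using margin[OF i] by (simp add: algebra_simps)
  qed
  then have "norm bu \<le> norm ((1 - \<delta>) *\<^sub>R bv + \<delta> *\<^sub>R z')"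
    using beta_minimal(2)[OF z'] unfolding bu_def by blast
  also have "\<dots> \<le> norm bv + \<delta> * norm z'" by (rule norm_convex_combination_le[OF \<delta>])
  finally show ?thesis unfolding bu_def bv_def .
qed

lemma perturbation_ratio_bound:
  fixes a b c z :: real
  assumes "0 < a" "0 \<le> c" "c \<le> a / 2" "a \<le> b + c" "z \<le> a + c"
  shows "z \<le> (1 + 4 * c / a) * b"
proof -
  have "1 \<le> 2 * b / a" using assms by (simp add: field_simps)
  then have "2 * c * 1 \<le> 2 * c * (2 * b / a)" using \<open>0 \<le> c\<close> by (intro mult_left_mono) simp_all
  then show ?thesis using assms by (simp add: algebra_simps)
qed

lemma norm_interpolation_le:
  assumes \<delta>: "0 \<le> \<delta>" "\<delta> \<le> 1" and z': "z' \<in> Ft Pm w l \<epsilon> X u" "norm z' \<le> D"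
    and shift: "\<And>i z. i \<in> {1..2*l} \<Longrightarrow> \<bar>gt Pm w l \<epsilon> X i z u - gt Pm w l \<epsilon> X i z v\<bar> \<le> K"
    and margin: "\<And>i. i \<in> {1..2*l} \<Longrightarrow> \<delta> * gt Pm w l \<epsilon> X i z' u + K \<le> 0"
    and "beta Pm w l \<epsilon> X u \<noteq> 0" "\<delta> * D \<le> norm (beta Pm w l \<epsilon> X u) / 2"
  shows "norm ((1 - \<delta>) *\<^sub>R beta Pm w l \<epsilon> X u + \<delta> *\<^sub>R z')
         \<le> (1 + 4 * \<delta> * D / norm (beta Pm w l \<epsilon> X u)) * norm (beta Pm w l \<epsilon> X v)"
proof -
  define bu where "bu = beta Pm w l \<epsilon> X u"
  have "\<delta> * norm z' \<le> \<delta> * D" using z'(2) \<delta>(1) by (rule mult_left_mono)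
  then have "norm bu \<le> norm (beta Pm w l \<epsilon> X v) + \<delta> * D"
    and "norm ((1 - \<delta>) *\<^sub>R bu + \<delta> *\<^sub>R z') \<le> norm bu + \<delta> * D"
    using norm_beta_perturbation[OF \<delta> z'(1) shift margin] norm_convex_combination_le[OF \<delta>, of bu z']
    unfolding bu_def by linarith+
  moreover have "0 \<le> \<delta> * D" using \<delta>(1) order_trans[OF norm_ge_zero z'(2)] by simp
  ultimately show ?thesis
    using perturbation_ratio_bound[of "norm bu" "\<delta> * D"] assms(7,8)
    unfolding bu_def by (simp add: mult.assoc)
qed

theorem lemma4p5:
  fixes X :: "'a::euclidean_space set"
    and Pm :: "'a \<Rightarrow> 'b::euclidean_space"
    and w :: "nat \<Rightarrow> 'a" and l :: nat
    and \<epsilon> :: real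
    and u v :: 'a and zs :: 'b
  assumes reach_pos: "reach X > 0"
    and eps: "0 < \<epsilon>" "\<epsilon> < 1"
    and w_in: "\<forall>i \<in> {1..l}. w i \<in> secants X"
    and w_net: "\<forall>s \<in> secants X. \<exists>i \<in> {1..l}. dist s (w i) < \<epsilon> / 40"
    and Pm_lin: "linear Pm"
    and Pm_dist: "convex_hull_distortion Pm (\<epsilon> / 240) (secants X)"
    and u_in: "u \<in> Xtilde X - closure X"
    and zs_norm: "norm zs \<le> norm (u - nn X u)"
    and zs_g: "\<forall>i \<in> {1..2*l}. gt Pm w l \<epsilon> X i zs u \<le> - (\<epsilon> / 60) * norm (u - nn X u)"
    and beta_ne: "beta Pm w l \<epsilon> X u \<noteq> 0"
    and v_in: "v \<in> ball u (min 1 (\<epsilon> * norm (u - nn X u) / 480)) \<inter> Xtilde X"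
    and v_close: "norm (u - v) \<le> \<epsilon> * norm (beta Pm w l \<epsilon> X u) / 480"
  shows "let \<delta> = 240 * norm (u - v) / (\<epsilon> * norm (u - nn X u));
             zv = (1 - \<delta>) *\<^sub>R beta Pm w l \<epsilon> X u + \<delta> *\<^sub>R zs
         in norm zv \<le> (1 + 4 * \<delta> * norm (u - nn X u) / norm (beta Pm w l \<epsilon> X u))
                        * norm (beta Pm w l \<epsilon> X v)"
proof -
  define du where "du = norm (u - nn X u)"
  define bu where "bu = beta Pm w l \<epsilon> X u"
  define \<delta> where "\<delta> = 240 * norm (u - v) / (\<epsilon> * du)"
  have uX: "u \<in> Xtilde X" and vX: "v \<in> Xtilde X" using u_in v_in by auto
  have "nn X u \<in> closure X" by (rule nn_in_closure_Xtilde[OF reach_pos uX])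
  then have du0: "0 < du" using u_in unfolding du_def by auto
  have "480 * norm (u - v) < \<epsilon> * du" using v_in unfolding du_def by (simp add: dist_norm)
  then have "240 * norm (u - v) \<le> \<epsilon> * du" using norm_ge_zero[of "u - v"] by linarith
  then have \<delta>: "0 \<le> \<delta>" "\<delta> \<le> 1" "\<delta> * du = 240 * norm (u - v) / \<epsilon>"
    using du0 eps unfolding \<delta>_def by (simp_all add: field_simps)
  have shift: "\<bar>gt Pm w l \<epsilon> X i z u - gt Pm w l \<epsilon> X i z v\<bar> \<le> 4 * norm (u - v)"
    if "i \<in> {1..2*l}" for i z
  proof -
    have "\<bar>gt Pm w l \<epsilon> X i z u - gt Pm w l \<epsilon> X i z v\<bar> \<le> (3 + \<epsilon> / 10) * norm (u - v)"
      by (rule gt_shift_Xtilde[OF reach_pos uX vX w_in that]) (use eps in simp)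
    also have "\<dots> \<le> 4 * norm (u - v)" using eps by (simp add: mult_right_mono)
    finally show ?thesis .
  qed
  have zs_g': "gt Pm w l \<epsilon> X i zs u \<le> - (\<epsilon> / 60) * du" if "i \<in> {1..2*l}" for i
    using zs_g that unfolding du_def by blast
  have margin: "\<delta> * gt Pm w l \<epsilon> X i zs u + 4 * norm (u - v) \<le> 0" if "i \<in> {1..2*l}" for i
  proof -
    have "\<delta> * gt Pm w l \<epsilon> X i zs u \<le> \<delta> * (- (\<epsilon> / 60) * du)"
      using zs_g'[OF that] \<delta>(1) by (rule mult_left_mono)
    also have "\<dots> = - 4 * norm (u - v)" using \<delta>(3) eps by (simp add: field_simps)
    finally show ?thesis by simp
  qed
  have "- (\<epsilon> / 60) * du \<le> 0" using eps du0 by simp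
  then have "zs \<in> Ft Pm w l \<epsilon> X u" using zs_g' unfolding Ft_def by fastforce
  moreover have "\<delta> * du \<le> norm bu / 2"
  proof -
    have "\<delta> * du \<le> 240 * (\<epsilon> * norm bu / 480) / \<epsilon>"
      unfolding \<delta>(3) using v_close eps
      by (intro divide_right_mono mult_left_mono) (simp_all add: bu_def)
    then show ?thesis using eps by simp
  qed
  ultimately have "norm ((1 - \<delta>) *\<^sub>R bu + \<delta> *\<^sub>R zs)
      \<le> (1 + 4 * \<delta> * du / norm bu) * norm (beta Pm w l \<epsilon> X v)"
    using norm_interpolation_le[OF \<delta>(1,2) _ zs_norm[folded du_def] shift margin beta_ne]
    unfolding bu_def by blast
  then show ?thesis by (simp only: Let_def \<delta>_def du_def bu_def)
qed

end
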